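(* Let $E$ be a Hausdorff locally convex topological vector space, $\Omega$ an open subset of $E$, and $(Y,\|\cdot\|)$ a normed space. Let $g:\Omega\to Y$ be Gateaux differentiable and continuous at $\hat{x}\in\Omega$. Let $C$ be a family of functions from $Y$ into $\mathbb{R}$ which is $r$-equi-Lipschitz at $g(\hat{x})$ for some $r\ge0$ and equi-Gateaux differentiable at $g(\hat{x})$. Then (i) $\overline{\operatorname{conv}}^{w^*}\{d_G\phi(g(\hat{x})):\phi\in C\}$ is a $w^*$-compact subset of $Y^*$; (ii) the family $\{\phi\circ g:\phi\in C\}$ is equi-Gateaux differentiable at $\hat{x}$ and $d_G(\phi\circ g)(\hat{x})=d_G\phi(g(\hat{x}))\circ d_G g(\hat{x})$ for all $\phi\in C$.
   Context: A map $g$ into a normed space is Gateaux differentiable at $x$ if there is a continuous linear map $d_Gg(x)$ with $\lim_{t\searrow 0}\|(g(x+tv)-g(x)-t\,d_Gg(x)(v))/t\|=0$ for every $v$. A family $C$ of real functions is equi-Gateaux differentiable at $y$ if each $\phi\in C$ is Gateaux differentiable at $y$ and for every direction $v$, $\lim_{t\searrow0}\sup_{\phi\in C}|(\phi(y+tv)-\phi(y)-t\langle d_G\phi(y),v\rangle)/t|=0$. $C$ is $r$-equi-Lipschitz at $y$ if there is a ball centered at $y$ on which every $\phi\in C$ is $r$-Lipschitz. $\overline{\operatorname{conv}}^{w^*}$ denotes weak-star closed convex hull in $Y^*$. *)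

theory Defs
  imports "HOL-Analysis.Analysis"
begin

definition hlctvs :: "'a::{real_vector,t2_space} itself \<Rightarrow> bool" where
  "hlctvs _ \<longleftrightarrow>
     continuous_on UNIV (\<lambda>p::'a \<times> 'a. fst p + snd p) \<and>
     continuous_on UNIV (\<lambda>p::real \<times> 'a. fst p *\<^sub>R snd p) \<and>
     (\<forall>U. open U \<and> (0::'a) \<in> U \<longrightarrow> (\<exists>V. open V \<and> convex V \<and> 0 \<in> V \<and> V \<subseteq> U))"

definition gateaux_deriv ::
  "('a::{real_vector,topological_space} \<Rightarrow> 'b::real_normed_vector) \<Rightarrow> 'a \<Rightarrow> ('a \<Rightarrow> 'b) \<Rightarrow> bool" where
  "gateaux_deriv g x L \<longleftrightarrow> linear L \<and> continuous_on UNIV L \<and>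
     (\<forall>v. ((\<lambda>t. norm ((g (x + t *\<^sub>R v) - g x - t *\<^sub>R L v) /\<^sub>R t)) \<longlongrightarrow> 0) (at_right 0))"

definition gateaux_differentiable ::
  "('a::{real_vector,topological_space} \<Rightarrow> 'b::real_normed_vector) \<Rightarrow> 'a \<Rightarrow> bool" where
  "gateaux_differentiable g x \<longleftrightarrow> (\<exists>L. gateaux_deriv g x L)"

text \<open>The Gateaux derivative d_G g(x) (unique when it exists, since the codomain is Hausdorff).\<close>
definition gderiv ::
  "('a::{real_vector,topological_space} \<Rightarrow> 'b::real_normed_vector) \<Rightarrow> 'a \<Rightarrow> ('a \<Rightarrow> 'b)" where
  "gderiv g x = (SOME L. gateaux_deriv g x L)"

text \<open>Equi-Gateaux differentiability of a family of real functions at y. The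
  condition lim_{t\<searrow>0} sup_{phi\<in>C} |...| = 0 is written out in epsilon form.\<close>
definition equi_gateaux ::
  "('a::{real_vector,topological_space} \<Rightarrow> real) set \<Rightarrow> 'a \<Rightarrow> bool" where
  "equi_gateaux C y \<longleftrightarrow> (\<forall>\<phi>\<in>C. gateaux_differentiable \<phi> y) \<and>
     (\<forall>v. \<forall>\<epsilon>>0. \<forall>\<^sub>F t in at_right 0. \<forall>\<phi>\<in>C.
        \<bar>(\<phi> (y + t *\<^sub>R v) - \<phi> y - t * gderiv \<phi> y v) / t\<bar> \<le> \<epsilon>)"

definition equi_lipschitz_at :: "real \<Rightarrow> ('b::metric_space \<Rightarrow> real) set \<Rightarrow> 'b \<Rightarrow> bool" where
  "equi_lipschitz_at r C y \<longleftrightarrow> (\<exists>\<delta>>0. \<forall>\<phi>\<in>C. lipschitz_on r (ball y \<delta>) \<phi>)"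

text \<open>The weak-star topology on the dual Y* = of continuous linear functionals: the coarsest topology making
  all evaluations f \<mapsto> f y continuous, i.e. the pullback of the product topology.\<close>
definition weak_star :: "('b::real_normed_vector \<Rightarrow>\<^sub>L real) topology" where
  "weak_star = pullback_topology UNIV blinfun_apply (product_topology (\<lambda>_. euclideanreal) UNIV)"

definition wstar_closed_conv :: "('b::real_normed_vector \<Rightarrow>\<^sub>L real) set \<Rightarrow> ('b \<Rightarrow>\<^sub>L real) set" where
  "wstar_closed_conv S = weak_star closure_of (convex hull S)"

end

theory Submission
  imports Defs
begin

text \<open>
  For (ii), write \<open>y = g x\<close> and \<open>w = d\<^sub>Gg(x) v\<close>. Then
  \<open>\<phi>(g(x + t v)) - \<phi>(y) - t d\<^sub>G\<phi>(y) w\<close> splits into \<open>\<phi>(g(x + t v)) - \<phi>(y + t w)\<close>, which is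
  at most \<open>r \<parallel>g(x + t v) - y - t w\<parallel> = o(t)\<close> for all \<open>\<phi> \<in> C\<close> at once by the common Lipschitz
  constant, and \<open>\<phi>(y + t w) - \<phi>(y) - t d\<^sub>G\<phi>(y) w\<close>, which is \<open>o(t)\<close> uniformly in \<open>\<phi>\<close> by
  equi-differentiability.
  For (i), the derivative of an \<open>r\<close>-Lipschitz function has norm at most \<open>r\<close>, and the ball of
  radius \<open>r\<close> in \<open>Y\<^sup>*\<close> is convex, weak-star closed and, by Tychonoff's theorem applied to
  \<open>\<Prod>\<^sub>y [-r\<parallel>y\<parallel>, r\<parallel>y\<parallel>]\<close>, weak-star compact (Banach--Alaoglu).
\<close>

lemma topspace_weak_star [simp]: "topspace weak_star = UNIV"
  by (simp add: weak_star_def topspace_pullback_topology)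

lemma continuous_map_weak_star_eval:
  "continuous_map weak_star euclideanreal (\<lambda>f. blinfun_apply f y)"
proof -
  have "continuous_map weak_star euclideanreal ((\<lambda>h. h y) \<circ> blinfun_apply)"
    unfolding weak_star_def by (intro continuous_map_pullback continuous_map_product_projection) simp
  then show ?thesis by (simp add: o_def)
qed

lemma cball_blinfun_eq:
  fixes r :: real
  assumes "0 \<le> r"
  shows "cball 0 r =
           {f :: 'a::real_normed_vector \<Rightarrow>\<^sub>L 'b::real_normed_vector. \<forall>y. norm (f y) \<le> r * norm y}"
proof safe
  fix f :: "'a \<Rightarrow>\<^sub>L 'b" and y :: 'a assume "f \<in> cball 0 r"
  then have "norm f * norm y \<le> r * norm y" by (simp add: mult_right_mono)
  then show "norm (f y) \<le> r * norm y" using norm_blinfun[of f y] by linarith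
qed (auto intro: norm_blinfun_bound[OF assms])

lemma closedin_weak_star_cball: "closedin weak_star (cball (0 :: 'b::real_normed_vector \<Rightarrow>\<^sub>L real) r)"
proof (cases "r < 0")
  case False
  have "cball (0 :: 'b \<Rightarrow>\<^sub>L real) r =
          (\<Inter>y. {f \<in> topspace weak_star. blinfun_apply f y \<in> {-(r * norm y)..r * norm y}})"
    using False by (auto simp: cball_blinfun_eq abs_le_iff minus_le_iff)
  also have "closedin weak_star \<dots>"
    using closedin_continuous_map_preimage[OF continuous_map_weak_star_eval
        closed_closedin[THEN iffD1, OF closed_real_atLeastAtMost]]
    by (intro closedin_Inter) auto
  finally show ?thesis .
qed simp

lemma closedin_product_linear_bounded:
  "closedin (product_topology (\<lambda>_. euclideanreal) UNIV)
     {h :: 'b::real_normed_vector \<Rightarrow> real. linear h \<and> (\<forall>y. \<bar>h y\<bar> \<le> r * norm y)}"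
  (is "closedin ?P ?Q")
proof -
  have eval: "continuous_map ?P euclideanreal (\<lambda>h. h y)" for y
    by (intro continuous_map_product_projection) simp
  have add: "closedin ?P {h \<in> topspace ?P. h (x + y) = h x + h y}" for x y
    by (intro closedin_continuous_maps_eq[OF Hausdorff_space_euclidean] continuous_map_add eval)
  have scale: "closedin ?P {h \<in> topspace ?P. h (c *\<^sub>R x) = c * h x}" for c x
    by (intro closedin_continuous_maps_eq[OF Hausdorff_space_euclidean] continuous_map_real_mult_left eval)
  have bound: "closedin ?P {h \<in> topspace ?P. h y \<in> {-(r * norm y)..r * norm y}}" for y
    by (rule closedin_continuous_map_preimage[OF eval]) (simp add: closed_closedin[symmetric])
  have "?Q = (\<Inter>x. \<Inter>y. {h \<in> topspace ?P. h (x + y) = h x + h y}) \<inter>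
             (\<Inter>c. \<Inter>x. {h \<in> topspace ?P. h (c *\<^sub>R x) = c * h x}) \<inter>
             (\<Inter>y. {h \<in> topspace ?P. h y \<in> {-(r * norm y)..r * norm y}})"
    by (auto simp: linear_iff abs_le_iff minus_le_iff)
  also have "closedin ?P \<dots>"
    by (intro closedin_Int closedin_INT add scale bound) auto
  finally show ?thesis .
qed

lemma compactin_product_linear_bounded:
  "compactin (product_topology (\<lambda>_. euclideanreal) UNIV)
     {h :: 'b::real_normed_vector \<Rightarrow> real. linear h \<and> (\<forall>y. \<bar>h y\<bar> \<le> r * norm y)}"
proof (rule closed_compactin[OF _ _ closedin_product_linear_bounded])
  show "compactin (product_topology (\<lambda>_. euclideanreal) UNIV) (PiE UNIV (\<lambda>y. {-(r * norm y)..r * norm y}))"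
    by (simp add: compactin_PiE)
qed (auto simp: abs_le_iff minus_le_iff)

lemma compactin_weak_star_cball:
  "compactin weak_star (cball (0 :: 'b::real_normed_vector \<Rightarrow>\<^sub>L real) r)"
proof (cases "r < 0")
  case False
  let ?P = "product_topology (\<lambda>_::'b. euclideanreal) UNIV"
  define Q where "Q = {h :: 'b \<Rightarrow> real. linear h \<and> (\<forall>y. \<bar>h y\<bar> \<le> r * norm y)}"
  have bl: "bounded_linear h" if "h \<in> Q" for h
    using that by (auto simp: Q_def linear_iff mult.commute intro!: bounded_linear_intro[where K = r])
  have "continuous_map (subtopology ?P Q) weak_star Blinfun"
    unfolding weak_star_def
  proof (rule continuous_map_pullback')
    show "continuous_map (subtopology ?P Q) ?P (blinfun_apply \<circ> Blinfun)"
      by (rule continuous_map_eq[of _ _ id])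
         (auto simp: continuous_map_from_subtopology bounded_linear_Blinfun_apply bl)
  qed simp
  moreover have "compactin (subtopology ?P Q) Q"
    using compactin_product_linear_bounded by (simp add: Q_def compactin_subtopology)
  ultimately have "compactin weak_star (Blinfun ` Q)"
    by (rule image_compactin[rotated])
  moreover have "Blinfun ` Q = cball 0 r"
  proof safe
    fix h assume "h \<in> Q"
    then show "Blinfun h \<in> cball 0 r"
      using False by (simp add: cball_blinfun_eq bounded_linear_Blinfun_apply bl Q_def)
  next
    fix f :: "'b \<Rightarrow>\<^sub>L real" assume "f \<in> cball 0 r"
    then have "blinfun_apply f \<in> Q"
      using False by (simp add: cball_blinfun_eq Q_def bounded_linear.linear[OF blinfun.bounded_linear_right])
    then show "f \<in> Blinfun ` Q"
      by (metis blinfun_apply_inverse image_eqI)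
  qed
  ultimately show ?thesis by simp
qed simp

lemma compactin_wstar_closed_conv:
  assumes "S \<subseteq> cball 0 r"
  shows "compactin weak_star (wstar_closed_conv S)"
proof -
  have "convex hull S \<subseteq> cball 0 r"
    using assms convex_cball by (rule hull_minimal)
  then have "wstar_closed_conv S \<subseteq> cball 0 r"
    unfolding wstar_closed_conv_def by (rule closure_of_minimal[OF _ closedin_weak_star_cball])
  then show ?thesis
    unfolding wstar_closed_conv_def
    by (rule closed_compactin[OF compactin_weak_star_cball _ closedin_closure_of])
qed

lemma tendsto_abs_zero_iff_eventually_le:
  fixes q :: "'a \<Rightarrow> real"
  shows "((\<lambda>t. \<bar>q t\<bar>) \<longlongrightarrow> 0) F \<longleftrightarrow> (\<forall>\<epsilon>>0. \<forall>\<^sub>F t in F. \<bar>q t\<bar> \<le> \<epsilon>)"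
proof
  assume lim: "((\<lambda>t. \<bar>q t\<bar>) \<longlongrightarrow> 0) F"
  show "\<forall>\<epsilon>>0. \<forall>\<^sub>F t in F. \<bar>q t\<bar> \<le> \<epsilon>"
  proof (intro allI impI)
    fix \<epsilon> :: real assume "\<epsilon> > 0"
    from order_tendstoD(2)[OF lim this] show "\<forall>\<^sub>F t in F. \<bar>q t\<bar> \<le> \<epsilon>"
      by (rule eventually_mono) simp
  qed
next
  assume le: "\<forall>\<epsilon>>0. \<forall>\<^sub>F t in F. \<bar>q t\<bar> \<le> \<epsilon>"
  show "((\<lambda>t. \<bar>q t\<bar>) \<longlongrightarrow> 0) F"
  proof (rule tendstoI)
    fix \<epsilon> :: real assume "\<epsilon> > 0"
    with le have "\<forall>\<^sub>F t in F. \<bar>q t\<bar> \<le> \<epsilon> / 2" by (meson half_gt_zero)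
    then show "\<forall>\<^sub>F t in F. dist \<bar>q t\<bar> 0 < \<epsilon>"
      by eventually_elim (use \<open>\<epsilon> > 0\<close> in auto)
  qed
qed

lemma gateaux_deriv_real_iff:
  "gateaux_deriv (\<phi> :: 'a::{real_vector,topological_space} \<Rightarrow> real) y L \<longleftrightarrow>
     linear L \<and> continuous_on UNIV L \<and>
     (\<forall>v \<epsilon>. \<epsilon> > 0 \<longrightarrow>
       (\<forall>\<^sub>F t in at_right 0. \<bar>(\<phi> (y + t *\<^sub>R v) - \<phi> y - t * L v) / t\<bar> \<le> \<epsilon>))"
  unfolding gateaux_deriv_def tendsto_abs_zero_iff_eventually_le[symmetric]
  by (simp add: divide_inverse mult.commute)

lemma eventually_at_right_in_ball:
  fixes y w :: "'a::real_normed_vector"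
  assumes "\<delta> > 0"
  shows "\<forall>\<^sub>F t in at_right 0. y + t *\<^sub>R w \<in> ball y \<delta>"
proof -
  have "((\<lambda>t. y + t *\<^sub>R w) \<longlongrightarrow> y) (at_right 0)"
    by (intro tendsto_eq_intros) auto
  then show ?thesis
    using assms by (auto dest: tendstoD simp: dist_commute)
qed

lemma lipschitz_on_difference_quotient_le:
  fixes \<phi> :: "'a::real_normed_vector \<Rightarrow> real"
  assumes "lipschitz_on r S \<phi>" and "z \<in> S" and "y + t *\<^sub>R w \<in> S" and "t > 0"
  shows "\<bar>(\<phi> z - \<phi> y - t * c) / t\<bar> \<le>
           r * (norm (z - (y + t *\<^sub>R w)) / t) + \<bar>(\<phi> (y + t *\<^sub>R w) - \<phi> y - t * c) / t\<bar>"
proof -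
  let ?A = "(\<phi> z - \<phi> (y + t *\<^sub>R w)) / t"
  let ?B = "(\<phi> (y + t *\<^sub>R w) - \<phi> y - t * c) / t"
  have "\<bar>\<phi> z - \<phi> (y + t *\<^sub>R w)\<bar> \<le> r * norm (z - (y + t *\<^sub>R w))"
    using lipschitz_onD[OF assms(1-3)] by (simp add: dist_real_def dist_norm)
  then have A: "\<bar>?A\<bar> \<le> r * (norm (z - (y + t *\<^sub>R w)) / t)"
    using \<open>t > 0\<close> by (simp add: abs_divide divide_right_mono)
  have split: "(\<phi> z - \<phi> y - t * c) / t = ?A + ?B"
    by (simp add: add_divide_distrib[symmetric])
  have "\<bar>(\<phi> z - \<phi> y - t * c) / t\<bar> \<le> \<bar>?A\<bar> + \<bar>?B\<bar>"
    unfolding split by (rule abs_triangle_ineq)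
  with A show ?thesis
    by simp
qed

lemma gateaux_deriv_difference_quotient:
  assumes "gateaux_deriv g x L"
  shows "((\<lambda>t. (g (x + t *\<^sub>R v) - g x) /\<^sub>R t) \<longlongrightarrow> L v) (at_right 0)"
proof -
  let ?R = "\<lambda>t. (g (x + t *\<^sub>R v) - g x - t *\<^sub>R L v) /\<^sub>R t"
  have "(?R \<longlongrightarrow> 0) (at_right 0)"
    using assms tendsto_norm_zero_iff unfolding gateaux_deriv_def by blast
  then have "((\<lambda>t. L v + ?R t) \<longlongrightarrow> L v + 0) (at_right 0)"
    by (intro tendsto_add tendsto_const)
  moreover have "\<forall>\<^sub>F t in at_right 0. L v + ?R t = (g (x + t *\<^sub>R v) - g x) /\<^sub>R t"
    using eventually_at_right_less[of 0] by eventually_elim (simp add: algebra_simps)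
  ultimately show ?thesis
    by (simp add: tendsto_cong)
qed

lemma gateaux_deriv_unique:
  assumes "gateaux_deriv g x L1" and "gateaux_deriv g x L2"
  shows "L1 = L2"
proof
  fix v
  show "L1 v = L2 v"
    by (rule tendsto_unique[OF trivial_limit_at_right_real
          gateaux_deriv_difference_quotient[OF assms(1)] gateaux_deriv_difference_quotient[OF assms(2)]])
qed

lemma gderiv_eqI: "gateaux_deriv g x L \<Longrightarrow> gderiv g x = L"
  unfolding gderiv_def by (metis someI gateaux_deriv_unique)

lemma gateaux_deriv_gderiv: "gateaux_differentiable g x \<Longrightarrow> gateaux_deriv g x (gderiv g x)"
  unfolding gderiv_def gateaux_differentiable_def by (metis someI)

lemma gateaux_deriv_tendsto_along:
  assumes "gateaux_deriv g x L"
  shows "((\<lambda>t. g (x + t *\<^sub>R v)) \<longlongrightarrow> g x) (at_right 0)"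
proof -
  have "((\<lambda>t. g x + t *\<^sub>R ((g (x + t *\<^sub>R v) - g x) /\<^sub>R t)) \<longlongrightarrow> g x + 0 *\<^sub>R L v)
          (at_right 0)"
    by (intro tendsto_intros gateaux_deriv_difference_quotient[OF assms])
  moreover have "\<forall>\<^sub>F t in at_right 0. g x + t *\<^sub>R ((g (x + t *\<^sub>R v) - g x) /\<^sub>R t) = g (x + t *\<^sub>R v)"
    using eventually_at_right_less[of 0] by eventually_elim simp
  ultimately show ?thesis
    by (simp add: tendsto_cong)
qed

lemma gateaux_deriv_lipschitz_bound:
  fixes \<phi> :: "'a::real_normed_vector \<Rightarrow> 'b::real_normed_vector"
  assumes "gateaux_deriv \<phi> y L" and "lipschitz_on r (ball y \<delta>) \<phi>" and "\<delta> > 0"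
  shows "norm (L v) \<le> r * norm v"
proof (rule tendsto_upperbound)
  show "((\<lambda>t. norm ((\<phi> (y + t *\<^sub>R v) - \<phi> y) /\<^sub>R t)) \<longlongrightarrow> norm (L v)) (at_right 0)"
    by (intro tendsto_norm gateaux_deriv_difference_quotient assms(1))
  show "\<forall>\<^sub>F t in at_right 0. norm ((\<phi> (y + t *\<^sub>R v) - \<phi> y) /\<^sub>R t) \<le> r * norm v"
    using eventually_at_right_in_ball[where y = y and w = v, OF \<open>\<delta> > 0\<close>] eventually_at_right_less[of 0]
  proof eventually_elim
    case (elim t)
    have "norm (\<phi> (y + t *\<^sub>R v) - \<phi> y) \<le> r * norm (t *\<^sub>R v)"
      using lipschitz_onD[OF assms(2) elim(1) centre_in_ball[THEN iffD2, OF \<open>\<delta> > 0\<close>]]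
      by (simp add: dist_norm)
    moreover have "norm ((\<phi> (y + t *\<^sub>R v) - \<phi> y) /\<^sub>R t) = norm (\<phi> (y + t *\<^sub>R v) - \<phi> y) / t"
      using elim(2) by (simp add: divide_inverse_commute)
    ultimately show ?case
      using elim(2) by (simp add: pos_divide_le_eq mult_ac)
  qed
qed simp

lemma equi_gateaux_singleton:
  assumes "gateaux_differentiable \<phi> y"
  shows "equi_gateaux {\<phi>} y"
  using gateaux_deriv_gderiv[OF assms] assms
  by (simp add: equi_gateaux_def gateaux_deriv_real_iff)

lemma equi_gateaux_compose_estimate:
  fixes g :: "'a::{real_vector,topological_space} \<Rightarrow> 'b::real_normed_vector"
  assumes g: "gateaux_deriv g x L"
    and lip: "\<forall>\<phi>\<in>C. lipschitz_on r (ball (g x) \<delta>) \<phi>" and "\<delta> > 0"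
    and C: "equi_gateaux C (g x)" and "\<epsilon> > 0"
  shows "\<forall>\<^sub>F t in at_right 0. \<forall>\<phi>\<in>C.
           \<bar>(\<phi> (g (x + t *\<^sub>R v)) - \<phi> (g x) - t * gderiv \<phi> (g x) (L v)) / t\<bar> \<le> \<epsilon>"
proof -
  define y w where "y = g x" and "w = L v"
  define e where "e t = norm ((g (x + t *\<^sub>R v) - y - t *\<^sub>R w) /\<^sub>R t)" for t
  have "(e \<longlongrightarrow> 0) (at_right 0)"
    using g unfolding gateaux_deriv_def e_def y_def w_def by blast
  then have "((\<lambda>t. r * e t) \<longlongrightarrow> 0) (at_right 0)"
    by (rule tendsto_mult_right_zero)
  then have small: "\<forall>\<^sub>F t in at_right 0. r * e t < \<epsilon> / 2"
    using \<open>\<epsilon> > 0\<close> by (intro order_tendstoD(2)) auto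
  have unif: "\<forall>\<^sub>F t in at_right 0. \<forall>\<phi>\<in>C.
                \<bar>(\<phi> (y + t *\<^sub>R w) - \<phi> y - t * gderiv \<phi> y w) / t\<bar> \<le> \<epsilon> / 2"
    using C \<open>\<epsilon> > 0\<close> unfolding equi_gateaux_def y_def by (meson half_gt_zero)
  have "\<forall>\<^sub>F t in at_right 0. g (x + t *\<^sub>R v) \<in> ball y \<delta>"
    using tendstoD[OF gateaux_deriv_tendsto_along[OF g] \<open>\<delta> > 0\<close>] by (simp add: y_def dist_commute)
  then show ?thesis
    using eventually_at_right_in_ball[where y = y and w = w, OF \<open>\<delta> > 0\<close>] small unif eventually_at_right_less[of 0]
    unfolding y_def[symmetric] w_def[symmetric]
  proof eventually_elim
    case (elim t)
    have e: "norm (g (x + t *\<^sub>R v) - (y + t *\<^sub>R w)) / t = e t"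
      using elim(5) by (simp add: e_def diff_diff_eq divide_inverse_commute)
    show ?case
    proof
      fix \<phi> assume "\<phi> \<in> C"
      have "\<bar>(\<phi> (g (x + t *\<^sub>R v)) - \<phi> y - t * gderiv \<phi> y w) / t\<bar> \<le>
              r * e t + \<bar>(\<phi> (y + t *\<^sub>R w) - \<phi> y - t * gderiv \<phi> y w) / t\<bar>"
        using lipschitz_on_difference_quotient_le[OF lip[rule_format, OF \<open>\<phi> \<in> C\<close>, folded y_def] elim(1,2,5)]
        by (simp only: e)
      also have "\<dots> \<le> r * e t + \<epsilon> / 2"
        using elim(4) \<open>\<phi> \<in> C\<close> by simp
      also have "\<dots> \<le> \<epsilon>"
        using elim(3) by simp
      finally show "\<bar>(\<phi> (g (x + t *\<^sub>R v)) - \<phi> y - t * gderiv \<phi> y w) / t\<bar> \<le> \<epsilon>" .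
    qed
  qed
qed

lemma gateaux_deriv_compose_lipschitz:
  fixes g :: "'a::{real_vector,topological_space} \<Rightarrow> 'b::real_normed_vector" and \<phi> :: "'b \<Rightarrow> real"
  assumes g: "gateaux_deriv g x L" and \<phi>: "gateaux_deriv \<phi> (g x) M"
    and lip: "lipschitz_on r (ball (g x) \<delta>) \<phi>" and "\<delta> > 0"
  shows "gateaux_deriv (\<phi> \<circ> g) x (M \<circ> L)"
proof -
  have "gateaux_differentiable \<phi> (g x)" and M: "gderiv \<phi> (g x) = M"
    using \<phi> by (auto simp: gateaux_differentiable_def gderiv_eqI)
  then have "\<forall>\<^sub>F t in at_right 0.
               \<bar>((\<phi> \<circ> g) (x + t *\<^sub>R v) - (\<phi> \<circ> g) x - t * (M \<circ> L) v) / t\<bar> \<le> \<epsilon>"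
    if "\<epsilon> > 0" for v \<epsilon>
    using equi_gateaux_compose_estimate[where C = "{\<phi>}" and v = v, OF g _ \<open>\<delta> > 0\<close> equi_gateaux_singleton that] lip
    by (simp add: M)
  moreover have "linear L" "continuous_on UNIV L" "linear M" "continuous_on UNIV M"
    using g \<phi> unfolding gateaux_deriv_def by auto
  then have "linear (M \<circ> L)" and "continuous_on UNIV (M \<circ> L)"
    by (auto simp: o_def intro: linear_compose[unfolded o_def] continuous_on_compose2[of UNIV M])
  ultimately show ?thesis
    by (simp add: gateaux_deriv_real_iff)
qed

lemma equi_gateaux_compose:
  fixes g :: "'a::{real_vector,topological_space} \<Rightarrow> 'b::real_normed_vector"
  assumes g: "gateaux_deriv g x L"
    and lip: "\<forall>\<phi>\<in>C. lipschitz_on r (ball (g x) \<delta>) \<phi>" and "\<delta> > 0"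
    and C: "equi_gateaux C (g x)"
  shows "equi_gateaux ((\<lambda>\<phi>. \<phi> \<circ> g) ` C) x"
  unfolding equi_gateaux_def
proof (intro conjI allI impI)
  have deriv: "gateaux_deriv (\<phi> \<circ> g) x (gderiv \<phi> (g x) \<circ> L)" if "\<phi> \<in> C" for \<phi>
    using C that lip unfolding equi_gateaux_def
    by (blast intro: gateaux_deriv_compose_lipschitz[OF g _ _ \<open>\<delta> > 0\<close>] gateaux_deriv_gderiv)
  then show "\<forall>\<psi>\<in>(\<lambda>\<phi>. \<phi> \<circ> g) ` C. gateaux_differentiable \<psi> x"
    by (auto simp: gateaux_differentiable_def)
  have comp: "gderiv (\<phi> \<circ> g) x = gderiv \<phi> (g x) \<circ> L" if "\<phi> \<in> C" for \<phi>
    using deriv[OF that] by (rule gderiv_eqI)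
  fix v and \<epsilon> :: real assume "\<epsilon> > 0"
  from equi_gateaux_compose_estimate[OF g lip \<open>\<delta> > 0\<close> C this, of v]
  show "\<forall>\<^sub>F t in at_right 0. \<forall>\<psi>\<in>(\<lambda>\<phi>. \<phi> \<circ> g) ` C.
          \<bar>(\<psi> (x + t *\<^sub>R v) - \<psi> x - t * gderiv \<psi> x v) / t\<bar> \<le> \<epsilon>"
    by eventually_elim (auto simp: comp)
qed

theorem lemma4p7:
  fixes \<Omega> :: "'a::{real_vector,t2_space} set"
    and g :: "'a \<Rightarrow> 'b::real_normed_vector"
    and C :: "('b \<Rightarrow> real) set"
    and xh :: 'a and r :: real
  assumes "hlctvs TYPE('a)"
    and "open \<Omega>" and "xh \<in> \<Omega>"
    and "gateaux_differentiable g xh"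
    and "continuous (at xh within \<Omega>) g"
    and "r \<ge> 0" and "equi_lipschitz_at r C (g xh)"
    and "equi_gateaux C (g xh)"
  shows "compactin weak_star
           (wstar_closed_conv {f. \<exists>\<phi>\<in>C. blinfun_apply f = gderiv \<phi> (g xh)}) \<and>
         equi_gateaux ((\<lambda>\<phi>. \<phi> \<circ> g) ` C) xh \<and>
         (\<forall>\<phi>\<in>C. gderiv (\<phi> \<circ> g) xh = gderiv \<phi> (g xh) \<circ> gderiv g xh)"
proof -
  obtain \<delta> where "\<delta> > 0" and lip: "\<forall>\<phi>\<in>C. lipschitz_on r (ball (g xh) \<delta>) \<phi>"
    using \<open>equi_lipschitz_at r C (g xh)\<close> unfolding equi_lipschitz_at_def by blast
  have g: "gateaux_deriv g xh (gderiv g xh)"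
    using \<open>gateaux_differentiable g xh\<close> by (rule gateaux_deriv_gderiv)
  have \<phi>: "gateaux_deriv \<phi> (g xh) (gderiv \<phi> (g xh))" if "\<phi> \<in> C" for \<phi>
    using \<open>equi_gateaux C (g xh)\<close> that unfolding equi_gateaux_def by (blast intro: gateaux_deriv_gderiv)
  have "{f. \<exists>\<phi>\<in>C. blinfun_apply f = gderiv \<phi> (g xh)} \<subseteq> cball 0 r"
  proof clarify
    fix f \<phi> assume "\<phi> \<in> C" and f: "blinfun_apply f = gderiv \<phi> (g xh)"
    show "f \<in> cball 0 r"
      using gateaux_deriv_lipschitz_bound[OF \<phi>[OF \<open>\<phi> \<in> C\<close>] lip[rule_format, OF \<open>\<phi> \<in> C\<close>]
          \<open>\<delta> > 0\<close>]
      by (simp add: f norm_blinfun_bound \<open>r \<ge> 0\<close>)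
  qed
  moreover have "gderiv (\<phi> \<circ> g) xh = gderiv \<phi> (g xh) \<circ> gderiv g xh" if "\<phi> \<in> C" for \<phi>
    using gateaux_deriv_compose_lipschitz[OF g \<phi>[OF that] lip[rule_format, OF that] \<open>\<delta> > 0\<close>]
    by (rule gderiv_eqI)
  ultimately show ?thesis
    using compactin_wstar_closed_conv equi_gateaux_compose[OF g lip \<open>\<delta> > 0\<close> \<open>equi_gateaux C (g xh)\<close>]
    by blast
qed

end
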